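(* Let $G$ be a finite group of order $n\ge 3$, $k$ a positive integer, $a_1,\dots,a_k,b_1,\dots,b_k$ independent uniformly random elements of $G$, and for $(i,j)\in V=[k]\times[k]$ and $x\in G$ let $I_{(i,j)}(x)$ be the indicator of $\{x=a_ib_j \text{ or } x=b_ja_i\}$. Let $\Gamma=(V,E)$ be the graph with $(i,j)\sim(\ell,m)$ iff ($i=\ell$ and $j\ne m$) or ($i\ne \ell$ and $j=m$). For $x\ne y\in G$ let $\Gamma_{x,y}$ be the graph on $V\times\{x,y\}$ with $(v,z)\sim(u,z')$ iff $\{v,u\}\in E$, and $J(v,z)=I_v(z)$. Let $x\ne y\in G$. (1) Both $\Delta(\Gamma,\{I_v(x)\}_{v\in V})$ and $\Delta^*(\Gamma,\{I_v(x)\}_{v\in V})$ are at most $4\cdot\frac{k^3}{n^2}\exp\big(\frac{6k}{n-2}\big)$. (2) Both $\Delta(\Gamma_{x,y},\{J(v,z)\}_{(v,z)\in V\times\{x,y\}})$ and $\Delta^*(\Gamma_{x,y},\{J(v,z)\}_{(v,z)\in V\times\{x,y\}})$ are at most $16\cdot\frac{k^3}{n^2}\exp\big(\frac{12k}{n-2}\big)$.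
   Context: $[k]=\{1,\dots,k\}$. For a vertex $w$ and a set $S$ of vertices, $w\sim S$ means there is an edge between $w$ and some element of $S$ (so this may include elements of $S$ themselves). For a family of Bernoulli random variables $\{X_i\}_{i\in W}$ and a graph $\Gamma$ on $W$, define $$\Delta(\Gamma,\{X_i\})=\frac12\sum_{i\in W}\sum_{j\sim i}\mathbb{E}[X_iX_j]\prod_{l\sim\{i,j\}}(1-\mathbb{E}[X_l])^{-1},$$ $$\Delta^*(\Gamma,\{X_i\})=\frac12\sum_{i\in W}\sum_{j\sim i}\mathbb{E}[X_i]\mathbb{E}[X_j]\prod_{l\sim\{i,j\}}(1-\mathbb{E}[X_l])^{-1}.$$ *)

theory Defs
  imports "HOL-Probability.Probability" "HOL-Algebra.Group"
begin

definition Delta :: "'s pmf \<Rightarrow> 'v set \<Rightarrow> ('v \<Rightarrow> 'v \<Rightarrow> bool) \<Rightarrow> ('v \<Rightarrow> 's \<Rightarrow> real) \<Rightarrow> real" where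
  "Delta M W adj X = (1/2) * (\<Sum>i\<in>W. \<Sum>j\<in>{j\<in>W. adj i j}.
      measure_pmf.expectation M (\<lambda>\<omega>. X i \<omega> * X j \<omega>) *
      (\<Prod>l\<in>{l\<in>W. adj l i \<or> adj l j}. 1 / (1 - measure_pmf.expectation M (X l))))"

definition Delta_star :: "'s pmf \<Rightarrow> 'v set \<Rightarrow> ('v \<Rightarrow> 'v \<Rightarrow> bool) \<Rightarrow> ('v \<Rightarrow> 's \<Rightarrow> real) \<Rightarrow> real" where
  "Delta_star M W adj X = (1/2) * (\<Sum>i\<in>W. \<Sum>j\<in>{j\<in>W. adj i j}.
      measure_pmf.expectation M (X i) * measure_pmf.expectation M (X j) *
      (\<Prod>l\<in>{l\<in>W. adj l i \<or> adj l j}. 1 / (1 - measure_pmf.expectation M (X l))))"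

definition sample :: "('a, 'b) monoid_scheme \<Rightarrow> nat \<Rightarrow> ((nat \<Rightarrow> 'a) \<times> (nat \<Rightarrow> 'a)) pmf" where
  "sample G k = pmf_of_set (({1..k} \<rightarrow>\<^sub>E carrier G) \<times> ({1..k} \<rightarrow>\<^sub>E carrier G))"

definition Vk :: "nat \<Rightarrow> (nat \<times> nat) set" where
  "Vk k = {1..k} \<times> {1..k}"

definition Ind :: "('a, 'b) monoid_scheme \<Rightarrow> 'a \<Rightarrow> nat \<times> nat \<Rightarrow> (nat \<Rightarrow> 'a) \<times> (nat \<Rightarrow> 'a) \<Rightarrow> real" where
  "Ind G x v \<omega> = (case v of (i, j) \<Rightarrow> case \<omega> of (a, b) \<Rightarrow>
      of_bool (x = a i \<otimes>\<^bsub>G\<^esub> b j \<or> x = b j \<otimes>\<^bsub>G\<^esub> a i))"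

definition gam :: "nat \<times> nat \<Rightarrow> nat \<times> nat \<Rightarrow> bool" where
  "gam v u = (case v of (i, j) \<Rightarrow> case u of (l, m) \<Rightarrow>
      (i = l \<and> j \<noteq> m) \<or> (i \<noteq> l \<and> j = m))"

definition gam2 :: "(nat \<times> nat) \<times> 'a \<Rightarrow> (nat \<times> nat) \<times> 'a \<Rightarrow> bool" where
  "gam2 p q = gam (fst p) (fst q)"

definition Jv :: "('a, 'b) monoid_scheme \<Rightarrow> (nat \<times> nat) \<times> 'a \<Rightarrow> (nat \<Rightarrow> 'a) \<times> (nat \<Rightarrow> 'a) \<Rightarrow> real" where
  "Jv G p = Ind G (snd p) (fst p)"

end

theory Submission
  imports Defs
begin

text \<open>For fixed \<open>a\<^sub>i\<close> at most two values of \<open>b\<^sub>j\<close> satisfy \<open>t = a\<^sub>i b\<^sub>j\<close> or \<open>t = b\<^sub>j a\<^sub>i\<close>,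
  so every indicator has mean at most \<open>2/n\<close>. Adjacent vertices of \<open>\<Gamma>\<close> share a row or a column,
  so a product of two adjacent indicators depends on three independent coordinates, and fixing the
  shared one leaves at most two choices for each of the others: its mean is at most \<open>4/n\<^sup>2\<close>.
  In the graph on \<open>V \<times> Z\<close> every vertex has at most \<open>2k|Z|\<close> neighbours and every edge at most
  \<open>3k|Z|\<close>, and each factor \<open>(1 - E[X\<^sub>l])\<^sup>-\<^sup>1 \<le> (1 - 2/n)\<^sup>-\<^sup>1 \<le> exp (2/(n - 2))\<close>. Multiplying out gives
  \<open>4|Z|\<^sup>2 k\<^sup>3/n\<^sup>2 \<cdot> exp (6k|Z|/(n - 2))\<close>; part (1) is the case \<open>Z = {x}\<close>.\<close>

lemma sum_PiE_coordinate:
  fixes h :: "'b \<Rightarrow> real"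
  assumes "finite I" "i \<in> I"
  shows "(\<Sum>f\<in>I \<rightarrow>\<^sub>E A. h (f i)) = real (card A) ^ (card I - 1) * (\<Sum>y\<in>A. h y)"
proof -
  define J where "J = I - {i}"
  have J: "I = insert i J" "i \<notin> J" "finite J" "card J = card I - 1"
    using assms by (auto simp: J_def)
  have "(\<Sum>f\<in>I \<rightarrow>\<^sub>E A. h (f i)) = (\<Sum>(y, g)\<in>A \<times> (J \<rightarrow>\<^sub>E A). h y)"
    unfolding J(1) PiE_insert_eq
    by (subst sum.reindex) (use inj_combinator[OF J(2)] in \<open>auto simp: split_beta\<close>)
  also have "\<dots> = (\<Sum>y\<in>A. real (card A) ^ card J * h y)"
    using J(3) by (simp add: sum.cartesian_product[symmetric] card_PiE)
  finally show ?thesis by (simp add: J(4) sum_distrib_left)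
qed

lemma sum_PiE_two_coordinates:
  fixes h :: "'b \<Rightarrow> 'b \<Rightarrow> real"
  assumes "finite I" "i \<in> I" "i' \<in> I" "i \<noteq> i'"
  shows "(\<Sum>f\<in>I \<rightarrow>\<^sub>E A. h (f i) (f i')) = real (card A) ^ (card I - 2) * (\<Sum>y\<in>A. \<Sum>z\<in>A. h y z)"
proof -
  define J where "J = I - {i}"
  have J: "I = insert i J" "i \<notin> J" "finite J" "i' \<in> J"
    using assms by (auto simp: J_def)
  have "(\<Sum>f\<in>I \<rightarrow>\<^sub>E A. h (f i) (f i')) = (\<Sum>(y, g)\<in>A \<times> (J \<rightarrow>\<^sub>E A). h y (g i'))"
    unfolding J(1) PiE_insert_eq
    by (subst sum.reindex) (use inj_combinator[OF J(2)] assms(4) in \<open>auto simp: split_beta intro!: sum.cong\<close>)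
  also have "\<dots> = (\<Sum>y\<in>A. real (card A) ^ (card J - 1) * (\<Sum>z\<in>A. h y z))"
    using J by (simp add: sum.cartesian_product[symmetric] sum_PiE_coordinate)
  also have "card J - 1 = card I - 2"
    using assms by (simp add: J_def)
  finally show ?thesis by (simp add: sum_distrib_left)
qed

lemma expectation_sample:
  assumes "finite (carrier G)" "carrier G \<noteq> {}"
  shows "measure_pmf.expectation (sample G k) F =
    (\<Sum>a\<in>{1..k} \<rightarrow>\<^sub>E carrier G. \<Sum>b\<in>{1..k} \<rightarrow>\<^sub>E carrier G. F (a, b)) / real (card (carrier G)) ^ (2 * k)"
proof -
  let ?P = "{1..k} \<rightarrow>\<^sub>E carrier G"
  have "finite ?P" "?P \<noteq> {}" "card (?P \<times> ?P) = card (carrier G) ^ (2 * k)"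
    using assms by (auto simp: finite_PiE PiE_eq_empty_iff card_cartesian_product card_PiE power_mult_distrib[symmetric] mult_2 power_add)
  then show ?thesis
    by (simp add: sample_def integral_pmf_of_set sum.cartesian_product)
qed

lemma expectation_sample_swap:
  fixes F :: "(nat \<Rightarrow> 'a) \<times> (nat \<Rightarrow> 'a) \<Rightarrow> real"
  assumes "finite (carrier G)" "carrier G \<noteq> {}"
  shows "measure_pmf.expectation (sample G k) (F \<circ> prod.swap) = measure_pmf.expectation (sample G k) F"
proof -
  let ?P = "{1..k} \<rightarrow>\<^sub>E carrier G"
  have "(\<Sum>a\<in>?P. \<Sum>b\<in>?P. (F \<circ> prod.swap) (a, b)) = (\<Sum>a\<in>?P. \<Sum>b\<in>?P. F (a, b))"
    using sum.swap[of "\<lambda>a b. F (b, a)"] by simp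
  then show ?thesis by (simp only: expectation_sample[OF assms])
qed

lemma expectation_sample_first_coordinate:
  assumes "finite (carrier G)" "carrier G \<noteq> {}" "i \<in> {1..k}"
  shows "measure_pmf.expectation (sample G k) (\<lambda>(a, b). F (a i) b) =
    (\<Sum>x\<in>carrier G. \<Sum>b\<in>{1..k} \<rightarrow>\<^sub>E carrier G. F x b) / real (card (carrier G)) ^ Suc k"
proof -
  let ?n = "real (card (carrier G))"
  have "?n > 0" using assms by (simp add: card_gt_0_iff)
  moreover have "2 * k = (k - 1) + Suc k" using assms(3) by simp
  then have "?n ^ (2 * k) = ?n ^ (k - 1) * ?n ^ Suc k"
    by (simp only: power_add)
  ultimately show ?thesis
    using assms by (simp add: expectation_sample sum_PiE_coordinate[where h = "\<lambda>x. \<Sum>b\<in>_. F x b"])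
qed

lemma expectation_sample_single:
  fixes F :: "'a \<Rightarrow> 'a \<Rightarrow> real"
  assumes "finite (carrier G)" "carrier G \<noteq> {}" "i \<in> {1..k}" "j \<in> {1..k}"
  shows "measure_pmf.expectation (sample G k) (\<lambda>(a, b). F (a i) (b j)) =
    (\<Sum>x\<in>carrier G. \<Sum>y\<in>carrier G. F x y) / real (card (carrier G)) ^ 2"
proof -
  let ?n = "real (card (carrier G))"
  have "?n > 0" using assms by (simp add: card_gt_0_iff)
  moreover have "Suc k = (k - 1) + 2" using assms(3) by simp
  then have "?n ^ Suc k = ?n ^ (k - 1) * ?n ^ 2"
    by (simp only: power_add)
  ultimately show ?thesis
    using assms by (simp add: expectation_sample_first_coordinate[where F = "\<lambda>x b. F x (b j)"]
        sum_PiE_coordinate sum_distrib_left[symmetric])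
qed

lemma expectation_sample_row:
  fixes F :: "'a \<Rightarrow> 'a \<Rightarrow> 'a \<Rightarrow> real"
  assumes "finite (carrier G)" "carrier G \<noteq> {}" "i \<in> {1..k}" "j \<in> {1..k}" "j' \<in> {1..k}" "j \<noteq> j'"
  shows "measure_pmf.expectation (sample G k) (\<lambda>(a, b). F (a i) (b j) (b j')) =
    (\<Sum>x\<in>carrier G. \<Sum>y\<in>carrier G. \<Sum>z\<in>carrier G. F x y z) / real (card (carrier G)) ^ 3"
proof -
  let ?n = "real (card (carrier G))"
  have "?n > 0" using assms by (simp add: card_gt_0_iff)
  moreover have "Suc k = (k - 2) + 3" using assms(4-6) by auto
  then have "?n ^ Suc k = ?n ^ (k - 2) * ?n ^ 3"
    by (simp only: power_add)
  ultimately show ?thesis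
    using assms by (simp add: expectation_sample_first_coordinate[where F = "\<lambda>x b. F x (b j) (b j')"]
        sum_PiE_two_coordinates sum_distrib_left[symmetric])
qed

definition either_product :: "('a, 'b) monoid_scheme \<Rightarrow> 'a \<Rightarrow> 'a \<Rightarrow> 'a \<Rightarrow> bool" where
  "either_product G a b t \<longleftrightarrow> t = a \<otimes>\<^bsub>G\<^esub> b \<or> t = b \<otimes>\<^bsub>G\<^esub> a"

lemma sum_either_product_le:
  assumes "group G" "finite (carrier G)" "a \<in> carrier G"
  shows "(\<Sum>b\<in>carrier G. of_bool (either_product G a b t) :: real) \<le> 2"
proof -
  interpret group G by fact
  have "{b \<in> carrier G. either_product G a b t} \<subseteq> {inv\<^bsub>G\<^esub> a \<otimes>\<^bsub>G\<^esub> t, t \<otimes>\<^bsub>G\<^esub> inv\<^bsub>G\<^esub> a}"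
    using assms(3) by (auto simp: either_product_def inv_solve_left inv_solve_right)
  then have "card {b \<in> carrier G. either_product G a b t} \<le> card {inv\<^bsub>G\<^esub> a \<otimes>\<^bsub>G\<^esub> t, t \<otimes>\<^bsub>G\<^esub> inv\<^bsub>G\<^esub> a}"
    by (intro card_mono) auto
  also have "\<dots> \<le> 2"
    by (simp add: card_insert_if)
  finally have "card {b \<in> carrier G. either_product G a b t} \<le> 2" .
  then show ?thesis
    using assms(2) by (simp add: of_bool_def sum.If_cases Int_def)
qed

lemma Ind_eq_either_product: "Ind G t (i, j) = (\<lambda>(a, b). of_bool (either_product G (a i) (b j) t))"
  by (simp add: Ind_def either_product_def fun_eq_iff)

lemma Ind_nonneg: "0 \<le> Ind G t v \<omega>"
  by (simp add: Ind_def split: prod.split)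

lemma Ind_swap: "Ind G t (j, i) (b, a) = Ind G t (i, j) (a, b)"
  by (auto simp: Ind_def)

lemma expectation_Ind_le:
  assumes "group G" "finite (carrier G)" "v \<in> Vk k"
  shows "measure_pmf.expectation (sample G k) (Ind G t v) \<le> 2 / real (card (carrier G))"
proof -
  let ?n = "real (card (carrier G))"
  obtain i j where v: "v = (i, j)" "i \<in> {1..k}" "j \<in> {1..k}"
    using assms(3) by (auto simp: Vk_def)
  have ne: "carrier G \<noteq> {}"
    using assms(1) group.is_monoid monoid.carrier_not_empty by blast
  then have "?n > 0" using assms(2) by (simp add: card_gt_0_iff)
  have "measure_pmf.expectation (sample G k) (Ind G t v) =
      (\<Sum>x\<in>carrier G. \<Sum>y\<in>carrier G. of_bool (either_product G x y t)) / ?n ^ 2"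
    unfolding v(1) Ind_eq_either_product
    by (rule expectation_sample_single) (use assms(2) ne v in auto)
  also have "\<dots> \<le> (\<Sum>x\<in>carrier G. 2) / ?n ^ 2"
    using assms by (intro divide_right_mono sum_mono sum_either_product_le) auto
  also have "\<dots> = 2 / ?n"
    using \<open>?n > 0\<close> by (simp add: power2_eq_square)
  finally show ?thesis .
qed

lemma expectation_Ind_row_pair_le:
  assumes "group G" "finite (carrier G)" "i \<in> {1..k}" "j \<in> {1..k}" "m \<in> {1..k}" "j \<noteq> m"
  shows "measure_pmf.expectation (sample G k) (\<lambda>\<omega>. Ind G t (i, j) \<omega> * Ind G t' (i, m) \<omega>)
    \<le> 4 / real (card (carrier G)) ^ 2"
proof -
  let ?n = "real (card (carrier G))"
  let ?F = "\<lambda>x y z. of_bool (either_product G x y t) * of_bool (either_product G x z t') :: real"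
  have ne: "carrier G \<noteq> {}"
    using assms(1) group.is_monoid monoid.carrier_not_empty by blast
  then have "?n > 0" using assms(2) by (simp add: card_gt_0_iff)
  have "measure_pmf.expectation (sample G k) (\<lambda>\<omega>. Ind G t (i, j) \<omega> * Ind G t' (i, m) \<omega>) =
      (\<Sum>x\<in>carrier G. \<Sum>y\<in>carrier G. \<Sum>z\<in>carrier G. ?F x y z) / ?n ^ 3"
    unfolding Ind_eq_either_product case_prod_beta
    by (rule expectation_sample_row[where F = ?F, unfolded case_prod_beta]) (use assms ne in auto)
  also have "\<dots> = (\<Sum>x\<in>carrier G. (\<Sum>y\<in>carrier G. of_bool (either_product G x y t)) *
      (\<Sum>z\<in>carrier G. of_bool (either_product G x z t'))) / ?n ^ 3"
    by (simp add: sum_product)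
  also have "\<dots> \<le> (\<Sum>x\<in>carrier G. 2 * 2) / ?n ^ 3"
    using assms(1,2) by (intro divide_right_mono sum_mono mult_mono sum_either_product_le) (auto intro: sum_nonneg)
  also have "\<dots> = 4 / ?n ^ 2"
    using \<open>?n > 0\<close> by (simp add: power2_eq_square power3_eq_cube)
  finally show ?thesis .
qed

lemma expectation_Ind_pair_le:
  assumes "group G" "finite (carrier G)" "v \<in> Vk k" "u \<in> Vk k" "gam v u"
  shows "measure_pmf.expectation (sample G k) (\<lambda>\<omega>. Ind G t v \<omega> * Ind G t' u \<omega>)
    \<le> 4 / real (card (carrier G)) ^ 2"
proof -
  obtain i j l m where vu: "v = (i, j)" "u = (l, m)" "i \<in> {1..k}" "j \<in> {1..k}" "l \<in> {1..k}" "m \<in> {1..k}"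
    using assms(3,4) by (auto simp: Vk_def)
  consider "i = l" "j \<noteq> m" | "j = m" "i \<noteq> l"
    using assms(5) by (auto simp: gam_def vu)
  then show ?thesis
  proof cases
    case 1
    then show ?thesis
      using vu assms(1,2) by (simp add: expectation_Ind_row_pair_le)
  next
    case 2
    have ne: "carrier G \<noteq> {}"
      using assms(1) group.is_monoid monoid.carrier_not_empty by blast
    \<comment> \<open>swapping the roles of a and b turns a column pair into a row pair\<close>
    have "(\<lambda>\<omega>. Ind G t v \<omega> * Ind G t' u \<omega>) = (\<lambda>\<omega>. Ind G t (j, i) \<omega> * Ind G t' (j, l) \<omega>) \<circ> prod.swap"
      by (simp add: vu 2 fun_eq_iff split_paired_All Ind_swap)
    then show ?thesis
      using vu 2 assms(1,2) ne by (simp add: expectation_sample_swap expectation_Ind_row_pair_le)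
  qed
qed

definition edge_sum :: "'v set \<Rightarrow> ('v \<Rightarrow> 'v \<Rightarrow> bool) \<Rightarrow> ('v \<Rightarrow> 'v \<Rightarrow> real) \<Rightarrow> ('v \<Rightarrow> real) \<Rightarrow> real" where
  "edge_sum W adj w r = (1/2) * (\<Sum>i\<in>W. \<Sum>j\<in>{j\<in>W. adj i j}.
      w i j * (\<Prod>l\<in>{l\<in>W. adj l i \<or> adj l j}. 1 / (1 - r l)))"

lemma Delta_eq_edge_sum:
  "Delta M W adj X = edge_sum W adj (\<lambda>i j. measure_pmf.expectation M (\<lambda>\<omega>. X i \<omega> * X j \<omega>))
     (\<lambda>l. measure_pmf.expectation M (X l))"
  by (simp add: Delta_def edge_sum_def)

lemma Delta_star_eq_edge_sum:
  "Delta_star M W adj X = edge_sum W adj (\<lambda>i j. measure_pmf.expectation M (X i) * measure_pmf.expectation M (X j))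
     (\<lambda>l. measure_pmf.expectation M (X l))"
  by (simp add: Delta_star_def edge_sum_def)

lemma edge_sum_le:
  fixes d m :: nat
  assumes "\<And>i j. i \<in> W \<Longrightarrow> j \<in> W \<Longrightarrow> adj i j \<Longrightarrow> 0 \<le> w i j \<and> w i j \<le> q" and "0 \<le> q"
    and "\<And>l. l \<in> W \<Longrightarrow> 0 \<le> r l \<and> r l \<le> p" and "0 \<le> p" "p < 1"
    and "\<And>i. i \<in> W \<Longrightarrow> card {j\<in>W. adj i j} \<le> d"
    and "\<And>i j. i \<in> W \<Longrightarrow> j \<in> W \<Longrightarrow> adj i j \<Longrightarrow> card {l\<in>W. adj l i \<or> adj l j} \<le> m"
  shows "edge_sum W adj w r \<le> real (card W) * real d * q * (1 / (1 - p)) ^ m / 2"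
proof -
  let ?c = "1 / (1 - p)"
  have c: "1 \<le> ?c" using assms(4,5) by simp
  have factor: "0 \<le> 1 / (1 - r l) \<and> 1 / (1 - r l) \<le> ?c" if "l \<in> W" for l
    using assms(3)[OF that] assms(5) by (auto intro!: frac_le)
  have term_le: "w i j * (\<Prod>l\<in>{l\<in>W. adj l i \<or> adj l j}. 1 / (1 - r l)) \<le> q * ?c ^ m"
    if "i \<in> W" "j \<in> W" "adj i j" for i j
  proof -
    have "(\<Prod>l\<in>{l\<in>W. adj l i \<or> adj l j}. 1 / (1 - r l)) \<le> (\<Prod>l\<in>{l\<in>W. adj l i \<or> adj l j}. ?c)"
      using factor by (intro prod_mono) auto
    also have "\<dots> \<le> ?c ^ m"
      using power_increasing[OF assms(7)[OF that] c] by simp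
    finally show ?thesis
      using assms(1)[OF that] factor by (intro mult_mono) (auto intro!: prod_nonneg)
  qed
  have "(\<Sum>j\<in>{j\<in>W. adj i j}. w i j * (\<Prod>l\<in>{l\<in>W. adj l i \<or> adj l j}. 1 / (1 - r l)))
      \<le> real d * (q * ?c ^ m)" if "i \<in> W" for i
  proof -
    have "(\<Sum>j\<in>{j\<in>W. adj i j}. w i j * (\<Prod>l\<in>{l\<in>W. adj l i \<or> adj l j}. 1 / (1 - r l)))
        \<le> real (card {j\<in>W. adj i j}) * (q * ?c ^ m)"
      using term_le that by (intro sum_bounded_above) auto
    also have "\<dots> \<le> real d * (q * ?c ^ m)"
      using assms(6)[OF that] assms(2,5) by (intro mult_right_mono mult_nonneg_nonneg zero_le_power) simp_all
    finally show ?thesis .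
  qed
  then have "(\<Sum>i\<in>W. \<Sum>j\<in>{j\<in>W. adj i j}. w i j * (\<Prod>l\<in>{l\<in>W. adj l i \<or> adj l j}. 1 / (1 - r l)))
      \<le> real (card W) * (real d * (q * ?c ^ m))"
    by (rule sum_bounded_above)
  then show ?thesis
    by (simp add: edge_sum_def)
qed

lemma edge_sum_reindex:
  assumes "inj_on h W"
    and "\<And>i j. i \<in> W \<Longrightarrow> j \<in> W \<Longrightarrow> adj' (h i) (h j) = adj i j"
    and "\<And>i j. i \<in> W \<Longrightarrow> j \<in> W \<Longrightarrow> w' (h i) (h j) = w i j"
    and "\<And>l. l \<in> W \<Longrightarrow> r' (h l) = r l"
  shows "edge_sum (h ` W) adj' w' r' = edge_sum W adj w r"
proof -
  have inj: "inj_on h {j\<in>W. P j}" for P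
    using assms(1) by (rule inj_on_subset) auto
  have factor: "(\<Prod>l\<in>{l\<in>h ` W. adj' l (h i) \<or> adj' l (h j)}. 1 / (1 - r' l))
      = (\<Prod>l\<in>{l\<in>W. adj l i \<or> adj l j}. 1 / (1 - r l))" if "i \<in> W" "j \<in> W" for i j
  proof -
    have "{l\<in>h ` W. adj' l (h i) \<or> adj' l (h j)} = h ` {l\<in>W. adj l i \<or> adj l j}"
      using assms(2) that by auto
    then show ?thesis
      by (simp add: prod.reindex inj assms(4))
  qed
  have inner: "(\<Sum>j\<in>{j\<in>h ` W. adj' (h i) j}. w' (h i) j * (\<Prod>l\<in>{l\<in>h ` W. adj' l (h i) \<or> adj' l j}. 1 / (1 - r' l)))
      = (\<Sum>j\<in>{j\<in>W. adj i j}. w i j * (\<Prod>l\<in>{l\<in>W. adj l i \<or> adj l j}. 1 / (1 - r l)))"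
    if "i \<in> W" for i
  proof -
    have "{j\<in>h ` W. adj' (h i) j} = h ` {j\<in>W. adj i j}"
      using assms(2) that by auto
    then show ?thesis
      using that by (simp add: sum.reindex inj assms(3) factor)
  qed
  show ?thesis
    unfolding edge_sum_def by (simp add: sum.reindex assms(1) inner)
qed

lemma card_Vk: "card (Vk k) = k * k"
  by (simp add: Vk_def card_cartesian_product)

lemma gam_neighbours_subset: "{l\<in>Vk k. gam l (i, j)} \<subseteq> {i} \<times> {1..k} \<union> {1..k} \<times> {j}"
  by (auto simp: Vk_def gam_def)

lemma card_gam_neighbours_le: "card {u\<in>Vk k. gam v u} \<le> 2 * k"
proof -
  obtain i j where v: "v = (i, j)" by (cases v)
  have "{u\<in>Vk k. gam v u} = {u\<in>Vk k. gam u v}"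
    by (auto simp: gam_def split: prod.split)
  then have "card {u\<in>Vk k. gam v u} \<le> card ({i} \<times> {1..k} \<union> {1..k} \<times> {j})"
    using gam_neighbours_subset[of k i j] by (intro card_mono) (auto simp: v)
  also have "\<dots> \<le> card ({i} \<times> {1..k}) + card ({1..k} \<times> {j})"
    by (rule card_Un_le)
  finally show ?thesis
    by (simp add: card_cartesian_product)
qed

lemma card_gam_edge_neighbours_le:
  assumes "gam v w"
  shows "card {l\<in>Vk k. gam l v \<or> gam l w} \<le> 3 * k"
proof -
  obtain i j i' j' where vw: "v = (i, j)" "w = (i', j')"
    by (cases v, cases w)
  \<comment> \<open>adjacent vertices share a row or a column, so together they see at most three lines\<close>
  obtain A B C where ABC: "{l\<in>Vk k. gam l v \<or> gam l w} \<subseteq> A \<union> B \<union> C"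
    "finite A" "finite B" "finite C" "card A = k" "card B = k" "card C = k"
  proof (cases "i = i'")
    case True
    show ?thesis
      using gam_neighbours_subset[of k i j] gam_neighbours_subset[of k i' j'] True
      by (intro that[of "{i} \<times> {1..k}" "{1..k} \<times> {j}" "{1..k} \<times> {j'}"])
        (auto simp: vw card_cartesian_product)
  next
    case False
    then have "j = j'" using assms by (simp add: vw gam_def)
    then show ?thesis
      using gam_neighbours_subset[of k i j] gam_neighbours_subset[of k i' j']
      by (intro that[of "{i} \<times> {1..k}" "{i'} \<times> {1..k}" "{1..k} \<times> {j}"])
        (auto simp: vw card_cartesian_product)
  qed
  have "card {l\<in>Vk k. gam l v \<or> gam l w} \<le> card (A \<union> B \<union> C)"
    using ABC by (intro card_mono) auto
  also have "\<dots> \<le> card A + card B + card C"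
    using card_Un_le[of "A \<union> B" C] card_Un_le[of A B] by linarith
  finally show ?thesis
    by (simp add: ABC)
qed

lemma card_gam2_neighbours_le: "card {q\<in>Vk k \<times> Z. gam2 p q} \<le> 2 * k * card Z"
proof -
  have "{q\<in>Vk k \<times> Z. gam2 p q} = {u\<in>Vk k. gam (fst p) u} \<times> Z"
    by (auto simp: gam2_def)
  then show ?thesis
    using card_gam_neighbours_le[of k "fst p"] by (simp add: card_cartesian_product)
qed

lemma card_gam2_edge_neighbours_le:
  assumes "gam2 p q"
  shows "card {l\<in>Vk k \<times> Z. gam2 l p \<or> gam2 l q} \<le> 3 * k * card Z"
proof -
  have "{l\<in>Vk k \<times> Z. gam2 l p \<or> gam2 l q} = {u\<in>Vk k. gam u (fst p) \<or> gam u (fst q)} \<times> Z"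
    by (auto simp: gam2_def)
  then show ?thesis
    using card_gam_edge_neighbours_le[of "fst p" "fst q" k] assms by (simp add: card_cartesian_product gam2_def)
qed

lemma one_div_one_minus_power_le_exp:
  fixes p :: real
  assumes "0 \<le> p" "p < 1"
  shows "(1 / (1 - p)) ^ N \<le> exp (real N * p / (1 - p))"
proof -
  have "(1 / (1 - p)) ^ N = (1 + p / (1 - p)) ^ N"
    using assms(2) by (simp add: field_simps)
  also have "\<dots> \<le> exp (p / (1 - p)) ^ N"
    using assms by (intro power_mono exp_ge_add_one_self) auto
  finally show ?thesis
    by (simp add: exp_of_nat_mult[symmetric])
qed

lemma Delta_Vk_times_le:
  fixes G :: "('a, 'b) monoid_scheme" and k :: nat and Z :: "'a set"
  assumes "group G" "finite (carrier G)" "card (carrier G) \<ge> 3" "finite Z"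
  defines "n \<equiv> real (card (carrier G))" and "z \<equiv> real (card Z)"
  defines "B \<equiv> 4 * z ^ 2 * (real k ^ 3 / n ^ 2) * exp (6 * z * real k / (n - 2))"
  shows "Delta (sample G k) (Vk k \<times> Z) gam2 (Jv G) \<le> B"
    and "Delta_star (sample G k) (Vk k \<times> Z) gam2 (Jv G) \<le> B"
proof -
  let ?W = "Vk k \<times> Z" and ?E = "measure_pmf.expectation (sample G k)"
  let ?p = "2 / n" and ?m = "3 * k * card Z"
  have n: "n \<ge> 3" using assms(3) by (simp add: n_def)
  have p: "0 \<le> ?p" "?p < 1" using n by auto
  have single: "0 \<le> ?E (Jv G l) \<and> ?E (Jv G l) \<le> ?p" if "l \<in> ?W" for l
    using that expectation_Ind_le[OF assms(1,2)]
    by (auto simp: Jv_def n_def Ind_nonneg intro!: Bochner_Integration.integral_nonneg)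
  have pair: "0 \<le> ?E (\<lambda>\<omega>. Jv G i \<omega> * Jv G j \<omega>) \<and> ?E (\<lambda>\<omega>. Jv G i \<omega> * Jv G j \<omega>) \<le> ?p ^ 2"
    if "i \<in> ?W" "j \<in> ?W" "gam2 i j" for i j
    using that expectation_Ind_pair_le[OF assms(1,2)]
    by (auto simp: Jv_def gam2_def n_def power_divide Ind_nonneg intro!: Bochner_Integration.integral_nonneg)
  note degree = card_gam2_neighbours_le[of k Z]
  note edge_neighbours = card_gam2_edge_neighbours_le[of _ _ k Z]
  have "real (card ?W) * real (2 * k * card Z) * ?p ^ 2 * (1 / (1 - ?p)) ^ ?m / 2
      = 4 * z ^ 2 * (real k ^ 3 / n ^ 2) * (1 / (1 - ?p)) ^ ?m"
    by (simp add: card_cartesian_product card_Vk z_def power2_eq_square power3_eq_cube)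
  also have "\<dots> \<le> B"
    unfolding B_def using one_div_one_minus_power_le_exp[OF p, of ?m] n
    by (intro mult_left_mono) (simp_all add: z_def field_simps)
  finally have bound: "real (card ?W) * real (2 * k * card Z) * ?p ^ 2 * (1 / (1 - ?p)) ^ ?m / 2 \<le> B" .
  show "Delta (sample G k) ?W gam2 (Jv G) \<le> B"
    unfolding Delta_eq_edge_sum
    by (rule order_trans[OF edge_sum_le bound]) (use pair single p degree edge_neighbours in auto)
  show "Delta_star (sample G k) ?W gam2 (Jv G) \<le> B"
    unfolding Delta_star_eq_edge_sum
  proof (rule order_trans[OF edge_sum_le bound])
    fix i j assume "i \<in> ?W" "j \<in> ?W"
    then show "0 \<le> ?E (Jv G i) * ?E (Jv G j) \<and> ?E (Jv G i) * ?E (Jv G j) \<le> ?p ^ 2"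
      using single[of i] single[of j] mult_mono[of "?E (Jv G i)" ?p "?E (Jv G j)" ?p] n
      by (simp add: power2_eq_square)
  qed (use single p degree edge_neighbours in auto)
qed

lemma Delta_Vk_eq_lift_singleton:
  shows "Delta M (Vk k) gam (Ind G x) = Delta M (Vk k \<times> {x}) gam2 (Jv G)"
    and "Delta_star M (Vk k) gam (Ind G x) = Delta_star M (Vk k \<times> {x}) gam2 (Jv G)"
proof -
  have lift: "Vk k \<times> {x} = (\<lambda>v. (v, x)) ` Vk k" "inj_on (\<lambda>v. (v, x)) (Vk k)"
    by (auto simp: inj_on_def)
  show "Delta M (Vk k) gam (Ind G x) = Delta M (Vk k \<times> {x}) gam2 (Jv G)"
    unfolding Delta_eq_edge_sum lift(1)
    by (rule edge_sum_reindex[symmetric]) (simp_all add: lift(2) gam2_def Jv_def)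
  show "Delta_star M (Vk k) gam (Ind G x) = Delta_star M (Vk k \<times> {x}) gam2 (Jv G)"
    unfolding Delta_star_eq_edge_sum lift(1)
    by (rule edge_sum_reindex[symmetric]) (simp_all add: lift(2) gam2_def Jv_def)
qed

theorem lemma4p8:
  fixes G :: "('a, 'b) monoid_scheme" and k :: nat and x y :: 'a
  assumes "group G" and "finite (carrier G)" and "card (carrier G) \<ge> 3"
    and "k \<ge> 1" and "x \<in> carrier G" and "y \<in> carrier G" and "x \<noteq> y"
  shows "(Delta (sample G k) (Vk k) gam (\<lambda>v. Ind G x v)
           \<le> 4 * (real k ^ 3 / real (card (carrier G)) ^ 2) * exp (6 * real k / (real (card (carrier G)) - 2)))
     \<and> (Delta_star (sample G k) (Vk k) gam (\<lambda>v. Ind G x v)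
           \<le> 4 * (real k ^ 3 / real (card (carrier G)) ^ 2) * exp (6 * real k / (real (card (carrier G)) - 2)))
     \<and> (Delta (sample G k) (Vk k \<times> {x, y}) gam2 (Jv G)
           \<le> 16 * (real k ^ 3 / real (card (carrier G)) ^ 2) * exp (12 * real k / (real (card (carrier G)) - 2)))
     \<and> (Delta_star (sample G k) (Vk k \<times> {x, y}) gam2 (Jv G)
           \<le> 16 * (real k ^ 3 / real (card (carrier G)) ^ 2) * exp (12 * real k / (real (card (carrier G)) - 2)))"
  using Delta_Vk_times_le[OF assms(1-3), of "{x}" k] Delta_Vk_times_le[OF assms(1-3), of "{x, y}" k] assms(7)
  by (simp add: Delta_Vk_eq_lift_singleton)

end
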